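(* Let $n$ be a positive integer and let $\lambda=(\lambda_1\ge\lambda_2\ge\cdots)$ be an integer partition. Then $c_n(c_n(\lambda))=\lambda$ if and only if for every integer $k\ge 0$ there is at most one index $i$ with $kn<\lambda_i<(k+1)n$.
   Context: For a partition $\lambda$, let $\lambda'_j=\#\{t:\lambda_t\ge j\}$ be the length of the $j$-th column of its Young shape ($j\ge1$). For a positive integer $n$, $c_n(\lambda)$ is the partition $\mu=(\mu_1,\mu_2,\dots,\mu_k)$ (of the same size as $\lambda$, zero parts omitted) with $\mu_i=\sum_{j=(i-1)n+1}^{in}\lambda'_j$, i.e. $\mu_i$ is the total number of cells in columns $(i-1)n+1,\dots,in$ of $\lambda$. For example $c_3((7,6,6,6,4,3,3,1))=(22,13,1)$, and $c_1$ is conjugation. *)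

theory Defs
  imports Main
begin

definition is_partition :: "nat list \<Rightarrow> bool" where
  "is_partition lam \<longleftrightarrow> sorted_wrt (\<ge>) lam \<and> 0 \<notin> set lam"

text \<open>Length of the j-th column (j \<ge> 1) of the Young shape: number of parts \<ge> j.\<close>
definition col :: "nat list \<Rightarrow> nat \<Rightarrow> nat" where
  "col lam j = length (filter (\<lambda>t. j \<le> t) lam)"

text \<open>c_n(lam): the i-th part (i = 1,2,...) is the total number of cells in columns
  (i-1)n+1, ..., in of lam; zero parts omitted. Blocks are indexed from 0 here, and
  blocks with index \<ge> the largest part are empty (for n \<ge> 1).\<close>
definition cn :: "nat \<Rightarrow> nat list \<Rightarrow> nat list" where
  "cn n lam = filter (\<lambda>x. x \<noteq> 0)
     (map (\<lambda>i. \<Sum>j\<in>{i*n+1..(i+1)*n}. col lam j) [0..<Max (insert 0 (set lam))])"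

end

theory Submission
  imports Defs "HOL-Library.More_List"
begin

text \<open>Write each part as \<open>\<lambda>\<^sub>t = q\<^sub>t n + r\<^sub>t\<close> with \<open>r\<^sub>t < n\<close>. The \<open>i\<close>-th part of
  \<open>c\<^sub>n(\<lambda>)\<close> is \<open>n \<cdot> #{t. q\<^sub>t > i} + \<Sum>{r\<^sub>t. q\<^sub>t = i}\<close>. If no two parts with nonzero
  remainder share a quotient, that remainder sum is a single \<open>r\<^sub>t < n\<close>, and then row \<open>i\<close> of
  \<open>c\<^sub>n(\<lambda>)\<close> has as many cells in the \<open>j\<close>-th block of \<open>n\<close> columns as row \<open>j\<close> of \<open>\<lambda>\<close>
  has in the \<open>i\<close>-th block; summing over blocks gives \<open>c\<^sub>n(c\<^sub>n(\<lambda>)) = \<lambda>\<close>.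
  Conversely, \<open>c\<^sub>n(\<mu>)\<close> has at most as many parts not divisible by \<open>n\<close> as there are distinct
  quotients of such parts of \<open>\<mu>\<close>. So this count never increases under \<open>c\<^sub>n\<close>, and it drops
  strictly when two such parts share a quotient, which rules out \<open>c\<^sub>n(c\<^sub>n(\<lambda>)) = \<lambda>\<close>.\<close>

section \<open>Blocks of columns\<close>

definition block_cells :: "nat \<Rightarrow> nat list \<Rightarrow> nat \<Rightarrow> nat" where
  "block_cells n lam i = (\<Sum>t<length lam. min n (lam ! t - i * n))"

lemma col_eq_sum: "col lam j = (\<Sum>t<length lam. if j \<le> lam ! t then 1 else 0)"
proof -
  have "col lam j = sum_list (map (\<lambda>t. if j \<le> t then 1 else 0) lam)"
    unfolding col_def by (induction lam) auto
  then show ?thesis by (simp add: sum_list_sum_nth atLeast0LessThan)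
qed

lemma sum_block_indicator:
  "(\<Sum>j\<in>{i*n+1..(i+1)*n}. if j \<le> x then 1 else 0::nat) = min n (x - i * n)"
proof -
  have "(\<Sum>j\<in>{i*n+1..(i+1)*n}. if j \<le> x then 1 else 0::nat) = card {j\<in>{i*n+1..(i+1)*n}. j \<le> x}"
    by (simp add: sum.inter_filter[symmetric])
  also have "{j\<in>{i*n+1..(i+1)*n}. j \<le> x} = {i*n+1..min ((i+1)*n) x}" by auto
  finally show ?thesis by simp
qed

lemma sum_col_block: "(\<Sum>j\<in>{i*n+1..(i+1)*n}. col lam j) = block_cells n lam i"
  unfolding block_cells_def col_eq_sum
  by (subst sum.swap) (rule sum.cong[OF refl], rule sum_block_indicator)

lemma block_cells_map_upt:
  "block_cells n (map f [0..<m]) j = (\<Sum>i<m. min n (f i - j * n))"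
  by (simp add: block_cells_def)

lemma block_cells_eq_0_iff:
  assumes "n > 0"
  shows "block_cells n lam i = 0 \<longleftrightarrow> Max (insert 0 (set lam)) \<le> i * n"
proof -
  have "min n (x - y) = 0 \<longleftrightarrow> x \<le> y" for x y :: nat
    using assms by (auto simp: min_def)
  then have "block_cells n lam i = 0 \<longleftrightarrow> (\<forall>t<length lam. lam ! t \<le> i * n)"
    by (simp add: block_cells_def lessThan_def)
  also have "\<dots> \<longleftrightarrow> (\<forall>x\<in>set lam. x \<le> i * n)"
    by (simp add: all_set_conv_all_nth)
  finally show ?thesis by simp
qed

lemma less_ceiling_div_iff:
  fixes x i n :: nat
  assumes "n > 0"
  shows "i < (x + n - 1) div n \<longleftrightarrow> i * n < x"
proof -
  have "i < (x + n - 1) div n \<longleftrightarrow> Suc i \<le> (x + n - 1) div n" by (rule Suc_le_eq[symmetric])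
  also have "\<dots> \<longleftrightarrow> Suc i * n \<le> x + n - 1" using assms by (rule less_eq_div_iff_mult_less_eq)
  also have "\<dots> \<longleftrightarrow> i * n < x" using assms by auto
  finally show ?thesis .
qed

lemma cn_eq_map_block_cells:
  assumes "n > 0"
  obtains m where "cn n lam = map (block_cells n lam) [0..<m]"
    and "\<And>i. block_cells n lam i \<noteq> 0 \<longleftrightarrow> i < m"
proof
  let ?M = "Max (insert 0 (set lam))"
  define m where "m = (?M + n - 1) div n"
  show nonzero: "block_cells n lam i \<noteq> 0 \<longleftrightarrow> i < m" for i
    using block_cells_eq_0_iff[OF assms, of lam i] less_ceiling_div_iff[OF assms, of i ?M]
    unfolding m_def by linarith
  have "?M \<le> ?M * n" using assms by (metis One_nat_def Suc_leI mult_le_mono2 mult.right_neutral)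
  then have "m \<le> ?M"
    using nonzero[of ?M] block_cells_eq_0_iff[OF assms, of lam ?M] by linarith
  then have "[0..<?M] = [0..<m] @ [m..<?M]"
    by (metis le_add_diff_inverse upt_add_eq_append zero_le)
  moreover have "filter (\<lambda>x. x \<noteq> 0) (map (block_cells n lam) [0..<m]) = map (block_cells n lam) [0..<m]"
    using nonzero by (simp add: filter_id_conv)
  moreover have "filter (\<lambda>x. x \<noteq> 0) (map (block_cells n lam) [m..<?M]) = []"
  proof -
    have "block_cells n lam i = 0" if "m \<le> i" for i
      using nonzero[of i] that by simp
    then show ?thesis by (simp add: filter_empty_conv)
  qed
  ultimately show "cn n lam = map (block_cells n lam) [0..<m]"
    unfolding cn_def sum_col_block by (simp del: upt_Suc)
qed

lemma sum_min_sub_mult: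
  fixes m n x :: nat
  shows "(\<Sum>i<m. min n (x - i * n)) = min x (m * n)"
proof (induction m)
  case (Suc m)
  have "min x (m * n) + min n (x - m * n) = min x (m * n + n)" by linarith
  with Suc show ?case by (simp add: add.commute)
qed simp


text \<open>A row of length \<open>q * n + r\<close> with \<open>r < n\<close> fills the blocks \<open>i < q\<close> and has \<open>r\<close> cells
  in block \<open>q\<close>.\<close>

definition full_rows :: "nat \<Rightarrow> nat list \<Rightarrow> nat \<Rightarrow> nat" where
  "full_rows n lam i = card {t. t < length lam \<and> i < lam ! t div n}"

definition partial_cells :: "nat \<Rightarrow> nat list \<Rightarrow> nat \<Rightarrow> nat" where
  "partial_cells n lam i = (\<Sum>t<length lam. if lam ! t div n = i then lam ! t mod n else 0)"

lemma min_sub_mult_eq: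
  fixes x i n :: nat
  assumes "n > 0"
  shows "min n (x - i * n) = (if i < x div n then n else 0) + (if x div n = i then x mod n else 0)"
proof -
  have x: "x = x div n * n + x mod n" by simp
  have "x mod n < n" using assms by simp
  consider "i < x div n" | "i = x div n" | "x div n < i" by linarith
  then show ?thesis
  proof cases
    case 1
    then have "Suc i * n \<le> x div n * n" by (intro mult_le_mono1) simp
    moreover have "x div n * n \<le> x" by simp
    ultimately have "Suc i * n \<le> x" by linarith
    then show ?thesis using 1 by simp
  next
    case 2
    then have "x - i * n = x mod n" using x by (metis add_diff_cancel_left')
    then show ?thesis using 2 \<open>x mod n < n\<close> by simp
  next
    case 3
    then have "(x div n + 1) * n \<le> i * n" by (intro mult_le_mono1) simp
    then have "x div n * n + n \<le> i * n" by simp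
    then have "x \<le> i * n" using x \<open>x mod n < n\<close> by linarith
    then show ?thesis using 3 by auto
  qed
qed

lemma block_cells_eq_full_rows_partial_cells:
  assumes "n > 0"
  shows "block_cells n lam i = n * full_rows n lam i + partial_cells n lam i"
proof -
  have "block_cells n lam i =
      (\<Sum>t<length lam. if i < lam ! t div n then n else 0) + partial_cells n lam i"
    unfolding block_cells_def partial_cells_def min_sub_mult_eq[OF assms] by (simp add: sum.distrib)
  also have "(\<Sum>t<length lam. if i < lam ! t div n then n else 0) = n * full_rows n lam i"
    unfolding full_rows_def by (simp add: sum.inter_filter[symmetric] lessThan_def)
  finally show ?thesis .
qed

lemma partial_cells_neq_0E:
  assumes "partial_cells n lam i \<noteq> 0"
  obtains t where "t < length lam" "lam ! t div n = i" "lam ! t mod n \<noteq> 0"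
proof -
  have "\<exists>t<length lam. lam ! t div n = i \<and> lam ! t mod n \<noteq> 0"
  proof (rule ccontr)
    assume "\<not> ?thesis"
    then have "partial_cells n lam i = 0" unfolding partial_cells_def by (intro sum.neutral) auto
    with assms show False by simp
  qed
  with that show ?thesis by blast
qed

lemma full_rows_le_length: "full_rows n lam i \<le> length lam"
proof -
  have "{t. t < length lam \<and> i < lam ! t div n} \<subseteq> {..<length lam}" by auto
  then show ?thesis unfolding full_rows_def by (metis card_lessThan card_mono finite_lessThan)
qed

lemma sorted_wrt_ge_nth_antimono:
  fixes xs :: "'a::order list"
  assumes "sorted_wrt (\<ge>) xs" "i \<le> j" "j < length xs"
  shows "xs ! j \<le> xs ! i"
  using assms sorted_wrt_nth_less[OF assms(1), of i j] by (cases "i = j") auto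

lemma less_full_rows_iff:
  assumes sorted: "sorted_wrt (\<ge>) lam" and "j < length lam"
  shows "j < full_rows n lam i \<longleftrightarrow> i < lam ! j div n"
proof
  assume "i < lam ! j div n"
  have "i < lam ! t div n" if "t \<le> j" for t
    using div_le_mono[OF sorted_wrt_ge_nth_antimono[OF sorted that \<open>j < length lam\<close>], of n]
      \<open>i < lam ! j div n\<close> by linarith
  then have "{..j} \<subseteq> {t. t < length lam \<and> i < lam ! t div n}"
    using \<open>j < length lam\<close> by auto
  then have "card {..j} \<le> full_rows n lam i" unfolding full_rows_def by (intro card_mono) auto
  then show "j < full_rows n lam i" by simp
next
  assume "j < full_rows n lam i"
  show "i < lam ! j div n"
  proof (rule ccontr)
    assume "\<not> i < lam ! j div n"
    have "{t. t < length lam \<and> i < lam ! t div n} \<subseteq> {..<j}"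
    proof
      fix t assume t: "t \<in> {t. t < length lam \<and> i < lam ! t div n}"
      show "t \<in> {..<j}"
      proof (rule ccontr)
        assume "t \<notin> {..<j}"
        then have "lam ! t div n \<le> lam ! j div n"
          using t by (intro div_le_mono sorted_wrt_ge_nth_antimono[OF sorted]) auto
        with t \<open>\<not> i < lam ! j div n\<close> show False by simp
      qed
    qed
    then have "full_rows n lam i \<le> j"
      unfolding full_rows_def by (metis card_lessThan card_mono finite_lessThan)
    then show False using \<open>j < full_rows n lam i\<close> by simp
  qed
qed


section \<open>Parts not divisible by \<open>n\<close>\<close>

definition count_nondivisible :: "nat \<Rightarrow> nat list \<Rightarrow> nat" where
  "count_nondivisible n xs = length (filter (\<lambda>x. x mod n \<noteq> 0) xs)"

definition nondivisible_quotients :: "nat \<Rightarrow> nat list \<Rightarrow> nat set" where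
  "nondivisible_quotients n lam = (\<lambda>t. lam ! t div n) ` {t. t < length lam \<and> lam ! t mod n \<noteq> 0}"

lemma card_nondivisible_quotients_le:
  "card (nondivisible_quotients n lam) \<le> count_nondivisible n lam"
  unfolding nondivisible_quotients_def count_nondivisible_def length_filter_conv_card
  by (rule card_image_le) simp

lemma card_nondivisible_quotients_less:
  assumes "t < length lam" "s < length lam" "t \<noteq> s" "lam ! t div n = lam ! s div n"
    "lam ! t mod n \<noteq> 0" "lam ! s mod n \<noteq> 0"
  shows "card (nondivisible_quotients n lam) < count_nondivisible n lam"
proof -
  let ?A = "{t. t < length lam \<and> lam ! t mod n \<noteq> 0}"
  have "\<not> inj_on (\<lambda>t. lam ! t div n) ?A" using assms unfolding inj_on_def by blast
  then have "card ((\<lambda>t. lam ! t div n) ` ?A) \<noteq> card ?A" using eq_card_imp_inj_on[of ?A] by auto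
  moreover have "card ((\<lambda>t. lam ! t div n) ` ?A) \<le> card ?A" by (rule card_image_le) simp
  ultimately show ?thesis
    unfolding nondivisible_quotients_def count_nondivisible_def length_filter_conv_card by simp
qed

lemma count_nondivisible_cn_le:
  assumes "n > 0"
  shows "count_nondivisible n (cn n lam) \<le> card (nondivisible_quotients n lam)"
proof -
  obtain m where cn: "cn n lam = map (block_cells n lam) [0..<m]"
    using cn_eq_map_block_cells[OF assms] by blast
  have "count_nondivisible n (cn n lam) = card {i. i < m \<and> block_cells n lam i mod n \<noteq> 0}"
    unfolding cn count_nondivisible_def length_filter_conv_card by (simp cong: conj_cong)
  also have "\<dots> \<le> card (nondivisible_quotients n lam)"
  proof (rule card_mono)
    show "finite (nondivisible_quotients n lam)" by (simp add: nondivisible_quotients_def)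
    show "{i. i < m \<and> block_cells n lam i mod n \<noteq> 0} \<subseteq> nondivisible_quotients n lam"
    proof
      fix i assume "i \<in> {i. i < m \<and> block_cells n lam i mod n \<noteq> 0}"
      then have "partial_cells n lam i mod n \<noteq> 0"
        by (simp add: block_cells_eq_full_rows_partial_cells[OF assms])
      then have "partial_cells n lam i \<noteq> 0" by (metis mod_0)
      then obtain t where "t < length lam" "lam ! t div n = i" "lam ! t mod n \<noteq> 0"
        by (rule partial_cells_neq_0E)
      then show "i \<in> nondivisible_quotients n lam"
        unfolding nondivisible_quotients_def by blast
    qed
  qed
  finally show ?thesis .
qed

lemma cn_cn_neq_if_nondivisible_parts_share_quotient:
  assumes "n > 0" "t < length lam" "s < length lam" "t \<noteq> s" "lam ! t div n = lam ! s div n"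
    "lam ! t mod n \<noteq> 0" "lam ! s mod n \<noteq> 0"
  shows "cn n (cn n lam) \<noteq> lam"
proof
  assume eq: "cn n (cn n lam) = lam"
  have "count_nondivisible n (cn n (cn n lam)) \<le> count_nondivisible n (cn n lam)"
    using count_nondivisible_cn_le[OF assms(1)] card_nondivisible_quotients_le le_trans by blast
  also have "\<dots> < count_nondivisible n lam"
    using count_nondivisible_cn_le[OF assms(1)] card_nondivisible_quotients_less[OF assms(2-)]
    by (rule le_less_trans)
  finally show False unfolding eq by simp
qed

section \<open>Partitions with separated nondivisible parts\<close>

locale separated_partition =
  fixes n :: nat and lam :: "nat list"
  assumes n_pos: "n > 0"
    and sorted: "sorted_wrt (\<ge>) lam"
    and positive: "0 \<notin> set lam"
    and separated: "\<And>t s. \<lbrakk>t < length lam; s < length lam; lam ! t div n = lam ! s div n;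
      lam ! t mod n \<noteq> 0; lam ! s mod n \<noteq> 0\<rbrakk> \<Longrightarrow> t = s"
begin

lemma quotient_less_quotient_iff:
  assumes t: "t < length lam" "lam ! t mod n \<noteq> 0" and j: "j < length lam"
  shows "lam ! t div n < lam ! j div n \<longleftrightarrow> j < t"
proof
  assume "lam ! t div n < lam ! j div n"
  then show "j < t"
    using div_le_mono[OF sorted_wrt_ge_nth_antimono[OF sorted _ j], of t n] by (meson not_le)
next
  assume "j < t"
  then have le: "lam ! t \<le> lam ! j" using sorted_wrt_ge_nth_antimono[OF sorted _ t(1)] by simp
  then have "lam ! t div n \<le> lam ! j div n" by (rule div_le_mono)
  moreover have "lam ! t div n \<noteq> lam ! j div n"
  proof
    assume eq: "lam ! t div n = lam ! j div n"
    have "lam ! t = lam ! j div n * n + lam ! t mod n" by (metis eq div_mult_mod_eq)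
    moreover have "lam ! j = lam ! j div n * n + lam ! j mod n" by simp
    ultimately have "lam ! t mod n \<le> lam ! j mod n" using le by linarith
    then have "lam ! j mod n \<noteq> 0" using t by simp
    then show False using separated[OF t(1) j eq t(2)] \<open>j < t\<close> by simp
  qed
  ultimately show "lam ! t div n < lam ! j div n" by simp
qed

lemma full_rows_quotient:
  assumes t: "t < length lam" "lam ! t mod n \<noteq> 0"
  shows "full_rows n lam (lam ! t div n) = t"
proof -
  let ?f = "full_rows n lam (lam ! t div n)"
  have iff: "j < ?f \<longleftrightarrow> j < t" if "j < length lam" for j
    using less_full_rows_iff[OF sorted that] quotient_less_quotient_iff[OF t that] by simp
  have "\<not> t < ?f" using iff[of t] t(1) by simp
  moreover have "\<not> ?f < t" using iff[of ?f] t(1) by (meson less_irrefl order.strict_trans)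
  ultimately show ?thesis by simp
qed

lemma partial_cells_quotient:
  assumes t: "t < length lam" "lam ! t mod n \<noteq> 0"
  shows "partial_cells n lam (lam ! t div n) = lam ! t mod n"
proof -
  have "partial_cells n lam (lam ! t div n) = (\<Sum>s<length lam. if s = t then lam ! t mod n else 0)"
    unfolding partial_cells_def using separated[OF _ t(1) _ _ t(2)] by (intro sum.cong) auto
  then show ?thesis using t(1) by simp
qed

lemma partial_cells_less: "partial_cells n lam i < n"
proof (cases "partial_cells n lam i = 0")
  case False
  then obtain t where t: "t < length lam" "lam ! t mod n \<noteq> 0" and i: "lam ! t div n = i"
    by (rule partial_cells_neq_0E)
  then have "partial_cells n lam i = lam ! t mod n" using partial_cells_quotient[OF t] by simp
  then show ?thesis using n_pos by simp
qed (use n_pos in simp)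

lemma partial_cells_eq:
  "partial_cells n lam i = (let j = full_rows n lam i in
     if j < length lam \<and> lam ! j div n = i then lam ! j mod n else 0)"
proof (cases "partial_cells n lam i = 0")
  case True
  have "lam ! j mod n = 0" if "j < length lam" "lam ! j div n = i" for j
  proof (rule ccontr)
    assume "lam ! j mod n \<noteq> 0"
    then have "partial_cells n lam i = lam ! j mod n"
      using partial_cells_quotient[OF that(1)] that(2) by simp
    with True \<open>lam ! j mod n \<noteq> 0\<close> show False by simp
  qed
  with True show ?thesis by (simp add: Let_def)
next
  case False
  then obtain t where t: "t < length lam" "lam ! t mod n \<noteq> 0" and i: "lam ! t div n = i"
    by (rule partial_cells_neq_0E)
  show ?thesis
    using full_rows_quotient[OF t] partial_cells_quotient[OF t] t(1) i by (simp add: Let_def)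
qed

text \<open>\<open>min n (x - j * n)\<close> is the number of cells a row of length \<open>x\<close> has in the \<open>j\<close>-th block
  of columns, so this is the transposition of rows and blocks described at the top.\<close>

lemma min_block_cells_sub_mult:
  "min n (block_cells n lam i - j * n) = min n (nth_default 0 lam j - i * n)"
proof -
  have block: "block_cells n lam i = full_rows n lam i * n + partial_cells n lam i"
    using block_cells_eq_full_rows_partial_cells[OF n_pos] by (simp add: mult.commute)
  have div: "block_cells n lam i div n = full_rows n lam i"
    and mod: "block_cells n lam i mod n = partial_cells n lam i"
    unfolding block using partial_cells_less n_pos by simp_all
  have lhs: "min n (block_cells n lam i - j * n) =
      (if j < full_rows n lam i then n else 0) + (if full_rows n lam i = j then partial_cells n lam i else 0)"
    by (simp only: min_sub_mult_eq[OF n_pos] div mod)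
  show ?thesis
  proof (cases "j < length lam")
    case True
    have "(if full_rows n lam i = j then partial_cells n lam i else 0) =
        (if lam ! j div n = i then lam ! j mod n else 0)"
    proof (cases "full_rows n lam i = j")
      case True
      then show ?thesis using partial_cells_eq \<open>j < length lam\<close> by (simp add: Let_def)
    next
      case False
      then have "lam ! j div n = i \<Longrightarrow> lam ! j mod n = 0"
        using full_rows_quotient[OF \<open>j < length lam\<close>] by blast
      with False show ?thesis by simp
    qed
    then show ?thesis
      unfolding lhs nth_default_nth[OF True] min_sub_mult_eq[OF n_pos, of "lam ! j"]
      using less_full_rows_iff[OF sorted True, of n i] by simp
  next
    case False
    then have "\<not> j < full_rows n lam i" and "full_rows n lam i = j \<Longrightarrow> partial_cells n lam i = 0"
      using full_rows_le_length[of n lam i] partial_cells_eq by (auto simp: Let_def)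
    then show ?thesis
      unfolding lhs nth_default_beyond[OF leI[OF False]] by simp
  qed
qed

lemma block_cells_cn: "block_cells n (cn n lam) j = nth_default 0 lam j"
proof -
  obtain m where cn: "cn n lam = map (block_cells n lam) [0..<m]"
    and nonzero: "\<And>i. block_cells n lam i \<noteq> 0 \<longleftrightarrow> i < m"
    using cn_eq_map_block_cells[OF n_pos] by blast
  have "nth_default 0 lam j \<le> m * n"
  proof (cases "j < length lam")
    case True
    have "Max (insert 0 (set lam)) \<le> m * n"
      using nonzero[of m] block_cells_eq_0_iff[OF n_pos] by blast
    then show ?thesis using True by (simp add: nth_default_nth)
  qed (simp add: nth_default_beyond)
  have "block_cells n (cn n lam) j = (\<Sum>i<m. min n (nth_default 0 lam j - i * n))"
    unfolding cn block_cells_map_upt min_block_cells_sub_mult ..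
  also have "\<dots> = nth_default 0 lam j"
    using sum_min_sub_mult \<open>nth_default 0 lam j \<le> m * n\<close> by (simp add: min_absorb1)
  finally show ?thesis .
qed

lemma cn_cn: "cn n (cn n lam) = lam"
proof -
  obtain m where cn: "cn n (cn n lam) = map (block_cells n (cn n lam)) [0..<m]"
    and nonzero: "\<And>i. block_cells n (cn n lam) i \<noteq> 0 \<longleftrightarrow> i < m"
    using cn_eq_map_block_cells[OF n_pos] by blast
  have "lam ! i \<noteq> 0" if "i < length lam" for i
    using positive nth_mem[OF that] by metis
  then have "i < m \<longleftrightarrow> i < length lam" for i
    using nonzero[of i] block_cells_cn[of i]
    by (cases "i < length lam") (auto simp: nth_default_nth nth_default_beyond)
  from this[of m] this[of "length lam"] have "m = length lam" by linarith
  then show ?thesis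
    unfolding cn block_cells_cn by (intro nth_equalityI) (simp_all add: nth_default_nth)
qed

end

lemma between_multiples_iff:
  fixes x k n :: nat
  assumes "n > 0"
  shows "k * n < x \<and> x < (k + 1) * n \<longleftrightarrow> x div n = k \<and> x mod n \<noteq> 0"
proof
  assume between: "k * n < x \<and> x < (k + 1) * n"
  then have "x div n = k" by (intro div_nat_eqI) (auto simp: mult.commute)
  moreover have "x mod n \<noteq> 0"
    using between div_mult_mod_eq[of x n] \<open>x div n = k\<close> by auto
  ultimately show "x div n = k \<and> x mod n \<noteq> 0" by simp
next
  assume "x div n = k \<and> x mod n \<noteq> 0"
  moreover have "x = x div n * n + x mod n" "x mod n < n" using assms by simp_all
  ultimately show "k * n < x \<and> x < (k + 1) * n" by simp
qed

lemma at_most_one_part_between_multiples_iff: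
  fixes n :: nat
  assumes "n > 0"
  shows "(\<forall>k. card {i. i < length lam \<and> k * n < lam ! i \<and> lam ! i < (k + 1) * n} \<le> 1) \<longleftrightarrow>
    (\<forall>t<length lam. \<forall>s<length lam. lam ! t div n = lam ! s div n \<longrightarrow>
      lam ! t mod n \<noteq> 0 \<longrightarrow> lam ! s mod n \<noteq> 0 \<longrightarrow> t = s)"
proof -
  have "{i. i < length lam \<and> k * n < lam ! i \<and> lam ! i < (k + 1) * n} =
      {i. i < length lam \<and> lam ! i div n = k \<and> lam ! i mod n \<noteq> 0}" for k
    using between_multiples_iff[OF assms] by blast
  then show ?thesis by (auto simp: card_le_Suc0_iff_eq)
qed

theorem mainTheorem2:
  fixes n :: nat and lam :: "nat list"
  assumes "n > 0" and "is_partition lam"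
  shows "cn n (cn n lam) = lam \<longleftrightarrow>
    (\<forall>k::nat. card {i. i < length lam \<and> k * n < lam ! i \<and> lam ! i < (k + 1) * n} \<le> 1)"
  unfolding at_most_one_part_between_multiples_iff[OF assms(1)]
proof (intro iffI allI impI)
  fix t s
  assume "cn n (cn n lam) = lam" "t < length lam" "s < length lam" "lam ! t div n = lam ! s div n"
    "lam ! t mod n \<noteq> 0" "lam ! s mod n \<noteq> 0"
  then show "t = s" using cn_cn_neq_if_nondivisible_parts_share_quotient[OF assms(1)] by blast
next
  assume "\<forall>t<length lam. \<forall>s<length lam. lam ! t div n = lam ! s div n \<longrightarrow>
    lam ! t mod n \<noteq> 0 \<longrightarrow> lam ! s mod n \<noteq> 0 \<longrightarrow> t = s"
  then interpret separated_partition n lam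
    using assms unfolding is_partition_def by unfold_locales blast+
  show "cn n (cn n lam) = lam" by (rule cn_cn)
qed

end
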